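(* Let $G$ be a group with identity $e$, let $*$ be a quandle operation on the set $G$, and let $f\colon G\times G\to G$ be a map. Let $X$ be a non-empty set with a family of binary operations $*_g\colon X\times X\to X$, $g\in G$, forming a $(G,f)$-family of quandles, i.e. satisfying: (1) $x*_g x=x$ for all $x\in X$, $g\in G$; (2) $x*_{gh}y=(x*_g y)*_h y$ and $x*_e y=x$ for all $x,y\in X$, $g,h\in G$ (here $gh$ is the product in $G$); (3) for all $x,y,z\in X$ and $g,h,q\in G$, $$(x*_{f(g,h)}y)*_{f(g*h,q)}z=(x*_{f(g,q)}z)*_{f(g*q,\,h*q)}(y*_{f(h,q)}z).$$ Then for all $x,y\in X$ and all $g,h,q\in G$, $$x*_{f(g,h)f(g*h,q)}\,y=x*_{f(g,q)f(g*q,\,h*q)}\,y,$$ where the subscripts are products in the group $G$.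
   Context: A quandle operation on a set $S$ is a binary operation $*$ with $x*x=x$, unique right division (for all $x,y$ there is a unique $z$ with $x=z*y$), and $(x*y)*z=(x*z)*(y*z)$. *)

theory Defs
  imports "HOL-Algebra.Group"
begin

definition quandle_op :: "'a set \<Rightarrow> ('a \<Rightarrow> 'a \<Rightarrow> 'a) \<Rightarrow> bool" where
  "quandle_op S qop \<longleftrightarrow>
     (\<forall>x\<in>S. \<forall>y\<in>S. qop x y \<in> S) \<and>
     (\<forall>x\<in>S. qop x x = x) \<and>
     (\<forall>x\<in>S. \<forall>y\<in>S. \<exists>!z. z \<in> S \<and> x = qop z y) \<and>
     (\<forall>x\<in>S. \<forall>y\<in>S. \<forall>z\<in>S. qop (qop x y) z = qop (qop x z) (qop y z))"

text \<open>A (G,f)-family of quandles on X: op g x y is x *_g y.\<close>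
definition GF_family_of_quandles ::
  "('g, 'b) monoid_scheme \<Rightarrow> ('g \<Rightarrow> 'g \<Rightarrow> 'g) \<Rightarrow> ('g \<Rightarrow> 'g \<Rightarrow> 'g) \<Rightarrow>
   'x set \<Rightarrow> ('g \<Rightarrow> 'x \<Rightarrow> 'x \<Rightarrow> 'x) \<Rightarrow> bool" where
  "GF_family_of_quandles G qop f X op \<longleftrightarrow>
     (\<forall>g\<in>carrier G. \<forall>x\<in>X. \<forall>y\<in>X. op g x y \<in> X) \<and>
     (\<forall>g\<in>carrier G. \<forall>x\<in>X. op g x x = x) \<and>
     (\<forall>g\<in>carrier G. \<forall>h\<in>carrier G. \<forall>x\<in>X. \<forall>y\<in>X.
        op (g \<otimes>\<^bsub>G\<^esub> h) x y = op h (op g x y) y) \<and>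
     (\<forall>x\<in>X. \<forall>y\<in>X. op \<one>\<^bsub>G\<^esub> x y = x) \<and>
     (\<forall>g\<in>carrier G. \<forall>h\<in>carrier G. \<forall>q\<in>carrier G. \<forall>x\<in>X. \<forall>y\<in>X. \<forall>z\<in>X.
        op (f (qop g h) q) (op (f g h) x y) z =
        op (f (qop g q) (qop h q)) (op (f g q) x z) (op (f h q) y z))"

end

theory Submission
  imports Defs
begin

lemma quandle_op_closed:
  assumes "quandle_op S qop" and "a \<in> S" and "b \<in> S"
  shows "qop a b \<in> S"
  using assms unfolding quandle_op_def by meson

lemma GF_family_op_idem:
  assumes "GF_family_of_quandles G qop f X op" and "a \<in> carrier G" and "y \<in> X"
  shows "op a y y = y"
  using assms unfolding GF_family_of_quandles_def by meson

lemma GF_family_op_mult: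
  assumes "GF_family_of_quandles G qop f X op"
    and "a \<in> carrier G" and "b \<in> carrier G" and "x \<in> X" and "y \<in> X"
  shows "op (a \<otimes>\<^bsub>G\<^esub> b) x y = op b (op a x y) y"
  using assms unfolding GF_family_of_quandles_def by meson

lemma GF_family_twisted_distrib:
  assumes "GF_family_of_quandles G qop f X op"
    and "g \<in> carrier G" and "h \<in> carrier G" and "q \<in> carrier G"
    and "x \<in> X" and "y \<in> X" and "z \<in> X"
  shows "op (f (qop g h) q) (op (f g h) x y) z =
         op (f (qop g q) (qop h q)) (op (f g q) x z) (op (f h q) y z)"
  using assms unfolding GF_family_of_quandles_def by meson

theorem lemma3p10:
  fixes G :: "('g, 'b) monoid_scheme"
    and qop :: "'g \<Rightarrow> 'g \<Rightarrow> 'g"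
    and f :: "'g \<Rightarrow> 'g \<Rightarrow> 'g"
    and X :: "'x set"
    and op :: "'g \<Rightarrow> 'x \<Rightarrow> 'x \<Rightarrow> 'x"
  assumes "group G"
    and "quandle_op (carrier G) qop"
    and "f \<in> carrier G \<rightarrow> carrier G \<rightarrow> carrier G"
    and "X \<noteq> {}"
    and "GF_family_of_quandles G qop f X op"
    and "x \<in> X" and "y \<in> X"
    and "g \<in> carrier G" and "h \<in> carrier G" and "q \<in> carrier G"
  shows "op (f g h \<otimes>\<^bsub>G\<^esub> f (qop g h) q) x y
       = op (f g q \<otimes>\<^bsub>G\<^esub> f (qop g q) (qop h q)) x y"
proof -
  \<comment> \<open>Put z = y in the twisted distributivity axiom.\<close>
  note family = \<open>GF_family_of_quandles G qop f X op\<close>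
  have qop_closed: "qop g h \<in> carrier G" "qop g q \<in> carrier G" "qop h q \<in> carrier G"
    using assms(2,8-10) by (auto intro: quandle_op_closed)
  have f_closed: "f g h \<in> carrier G" "f (qop g h) q \<in> carrier G" "f g q \<in> carrier G"
      "f (qop g q) (qop h q) \<in> carrier G" "f h q \<in> carrier G"
    using assms(3,8-10) qop_closed by auto
  have "op (f g h \<otimes>\<^bsub>G\<^esub> f (qop g h) q) x y = op (f (qop g h) q) (op (f g h) x y) y"
    using GF_family_op_mult[OF family] f_closed assms(6,7) by simp
  also have "\<dots> = op (f (qop g q) (qop h q)) (op (f g q) x y) (op (f h q) y y)"
    using GF_family_twisted_distrib[OF family assms(8-10,6,7,7)] .
  also have "\<dots> = op (f (qop g q) (qop h q)) (op (f g q) x y) y"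
    using GF_family_op_idem[OF family] f_closed assms(7) by simp
  also have "\<dots> = op (f g q \<otimes>\<^bsub>G\<^esub> f (qop g q) (qop h q)) x y"
    using GF_family_op_mult[OF family] f_closed assms(6,7) by simp
  finally show ?thesis .
qed

end
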